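(* Let $\mathcal{Y}$ be a finite set, let $\mathbb{P}_t$, $p_t$, $q_t$ be probability distributions on $\mathcal{Y}$, let $z \in \mathcal{Y}$ with $p_t(z) > 0$, and let $\alpha, \eta \in \mathbb{R}$. Let $\ell$ be the 0-1 loss $\ell(y, p) = \mathbb{I}\{y \neq \arg\max_{y'} p(y')\}$ (with a fixed tie-breaking rule for the argmax). For $r \in \{0,1\}$ define $$L(r) = \mathbb{E}_{y \sim \mathbb{P}_t}\Big[ r \cdot \big(\ell(y, p_t) + \alpha \cdot D_{\mathrm{TV}}(p_t, q_t)\big) + (1 - r) \cdot \Big(\ell(y, q_t) + \eta \cdot \frac{q_t(z)}{p_t(z)}\Big)\Big].$$ Define $\hat r \in \{0,1\}$ by $\hat r = 1$ if and only if $$\max_{y} q_t(y) < \max_{y} p_t(y) - \alpha \cdot D_{\mathrm{TV}}(p_t, q_t) + \eta \cdot \frac{q_t(z)}{p_t(z)}.$$ Then $$L(\hat r) - \min_{r \in \{0,1\}} L(r) \le \max_{y \in \mathcal{Y}} |\mathbb{P}_t(y) - q_t(y)| + \max_{y \in \mathcal{Y}} |\mathbb{P}_t(y) - p_t(y)|.$$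
   Context: $D_{\mathrm{TV}}(p,q) = \frac{1}{2}\sum_{y \in \mathcal{Y}} |p(y) - q(y)|$ is the total variation distance. Interpretation (not needed formally): $\mathcal{Y}$ is a token vocabulary, $q_t$ and $p_t$ are the next-token distributions of a draft model and a reference (verifier) model given a fixed prefix $x_{<t}$ and retrieved chunk $z$, $\mathbb{P}_t$ is the true next-token distribution, $r$ is the rejection decision, and $\hat r$ is the plug-in confidence-based rejection rule. *)

theory Defs
  imports Complex_Main
begin

definition is_distr :: "('y::finite \<Rightarrow> real) \<Rightarrow> bool" where
  "is_distr p \<longleftrightarrow> (\<forall>y. 0 \<le> p y) \<and> (\<Sum>y\<in>UNIV. p y) = 1"

definition tv_dist :: "('y::finite \<Rightarrow> real) \<Rightarrow> ('y \<Rightarrow> real) \<Rightarrow> real" where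
  "tv_dist p q = (1/2) * (\<Sum>y\<in>UNIV. \<bar>p y - q y\<bar>)"

text \<open>0-1 loss w.r.t. a fixed argmax (tie-breaking) rule am.\<close>
definition zero_one_loss :: "(('y \<Rightarrow> real) \<Rightarrow> 'y) \<Rightarrow> 'y \<Rightarrow> ('y \<Rightarrow> real) \<Rightarrow> real" where
  "zero_one_loss am y p = (if y \<noteq> am p then 1 else 0)"

definition rej_loss ::
  "(('y::finite \<Rightarrow> real) \<Rightarrow> 'y) \<Rightarrow> ('y \<Rightarrow> real) \<Rightarrow> ('y \<Rightarrow> real) \<Rightarrow> ('y \<Rightarrow> real)
    \<Rightarrow> 'y \<Rightarrow> real \<Rightarrow> real \<Rightarrow> real \<Rightarrow> real" where
  "rej_loss am P p q z \<alpha> \<eta> r =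
     (\<Sum>y\<in>UNIV. P y * (r * (zero_one_loss am y p + \<alpha> * tv_dist p q)
        + (1 - r) * (zero_one_loss am y q + \<eta> * (q z / p z))))"

definition rhat ::
  "('y::finite \<Rightarrow> real) \<Rightarrow> ('y \<Rightarrow> real) \<Rightarrow> 'y \<Rightarrow> real \<Rightarrow> real \<Rightarrow> real" where
  "rhat p q z \<alpha> \<eta> =
     (if Max (range q) < Max (range p) - \<alpha> * tv_dist p q + \<eta> * (q z / p z) then 1 else 0)"

end

theory Submission
  imports Defs
begin

text \<open>Both expected losses are affine in the probability of a single token:
  \<open>L(1) = 1 - \<P>(argmax p) + \<alpha> D\<^sub>T\<^sub>V(p,q)\<close> and \<open>L(0) = 1 - \<P>(argmax q) + \<eta> q(z)/p(z)\<close>.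
  The plug-in rule picks the smaller of the two plug-in estimates obtained by replacing
  \<open>\<P>\<close> with \<open>p\<close> in \<open>L(1)\<close> and with \<open>q\<close> in \<open>L(0)\<close>. Choosing the minimiser of estimates
  costs at most the sum of the two estimation errors, and these are bounded by
  \<open>|\<P> - p|\<close> resp. \<open>|\<P> - q|\<close> at a single point.\<close>

lemma expected_zero_one_loss:
  fixes P :: "'y::finite \<Rightarrow> real"
  assumes "is_distr P"
  shows "(\<Sum>y\<in>UNIV. P y * zero_one_loss am y f) = 1 - P (am f)"
proof -
  have "(\<Sum>y\<in>UNIV. P y * zero_one_loss am y f) = (\<Sum>y\<in>UNIV. P y - (if y = am f then P y else 0))"
    by (rule sum.cong) (auto simp: zero_one_loss_def)
  also have "\<dots> = (\<Sum>y\<in>UNIV. P y) - P (am f)"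
    by (simp add: sum_subtractf)
  finally show ?thesis
    using assms by (simp add: is_distr_def)
qed

lemma rej_loss_eq:
  fixes P p q :: "'y::finite \<Rightarrow> real"
  assumes "is_distr P"
  shows "rej_loss am P p q z \<alpha> \<eta> r =
           r * (1 - P (am p) + \<alpha> * tv_dist p q) + (1 - r) * (1 - P (am q) + \<eta> * (q z / p z))"
proof -
  let ?c = "r * (\<alpha> * tv_dist p q) + (1 - r) * (\<eta> * (q z / p z))"
  have "rej_loss am P p q z \<alpha> \<eta> r =
          (\<Sum>y\<in>UNIV. r * (P y * zero_one_loss am y p) + (1 - r) * (P y * zero_one_loss am y q) + P y * ?c)"
    unfolding rej_loss_def by (rule sum.cong) (auto simp: algebra_simps)
  also have "\<dots> = r * (\<Sum>y\<in>UNIV. P y * zero_one_loss am y p)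
                  + (1 - r) * (\<Sum>y\<in>UNIV. P y * zero_one_loss am y q) + (\<Sum>y\<in>UNIV. P y) * ?c"
    by (simp add: sum.distrib sum_distrib_left sum_distrib_right)
  finally show ?thesis
    using assms by (simp add: expected_zero_one_loss is_distr_def algebra_simps)
qed

lemma Max_range_eq_at_maximiser:
  fixes f :: "'y::finite \<Rightarrow> 'a::linorder"
  assumes "\<And>y. f y \<le> f x"
  shows "Max (range f) = f x"
  using assms by (intro Max_eqI) auto

lemma Max_range_ge:
  fixes f :: "'y::finite \<Rightarrow> 'a::linorder"
  shows "f x \<le> Max (range f)"
  by (rule Max_ge) auto

lemma min_by_estimates_excess:
  fixes a\<^sub>0 a\<^sub>1 b\<^sub>0 b\<^sub>1 :: real
  shows "(if b\<^sub>1 < b\<^sub>0 then a\<^sub>1 else a\<^sub>0) - min a\<^sub>0 a\<^sub>1 \<le> \<bar>a\<^sub>0 - b\<^sub>0\<bar> + \<bar>a\<^sub>1 - b\<^sub>1\<bar>"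
  by (auto simp: min_def abs_if)

theorem lemma2:
  fixes P p q :: "'y::finite \<Rightarrow> real" and z :: 'y and \<alpha> \<eta> :: real
    and am :: "('y \<Rightarrow> real) \<Rightarrow> 'y"
  assumes "is_distr P" and "is_distr p" and "is_distr q"
    and "p z > 0"
    and am_argmax: "\<And>f y. f y \<le> f (am f)"
  shows "rej_loss am P p q z \<alpha> \<eta> (rhat p q z \<alpha> \<eta>)
           - min (rej_loss am P p q z \<alpha> \<eta> 0) (rej_loss am P p q z \<alpha> \<eta> 1)
         \<le> Max (range (\<lambda>y. \<bar>P y - q y\<bar>)) + Max (range (\<lambda>y. \<bar>P y - p y\<bar>))"
proof -
  define L where "L = rej_loss am P p q z \<alpha> \<eta>"
  define t where "t = \<alpha> * tv_dist p q"
  define c where "c = \<eta> * (q z / p z)"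
  have L1: "L 1 = 1 - P (am p) + t" and L0: "L 0 = 1 - P (am q) + c"
    using rej_loss_eq[OF \<open>is_distr P\<close>] by (simp_all add: L_def t_def c_def)
  have "L (rhat p q z \<alpha> \<eta>) = (if 1 - p (am p) + t < 1 - q (am q) + c then L 1 else L 0)"
    using Max_range_eq_at_maximiser[of p "am p", OF am_argmax]
      Max_range_eq_at_maximiser[of q "am q", OF am_argmax]
    by (auto simp: rhat_def t_def c_def)
  then have "L (rhat p q z \<alpha> \<eta>) - min (L 0) (L 1)
               \<le> \<bar>L 0 - (1 - q (am q) + c)\<bar> + \<bar>L 1 - (1 - p (am p) + t)\<bar>"
    using min_by_estimates_excess[of "1 - p (am p) + t" "1 - q (am q) + c" "L 1" "L 0"] by simp
  also have "\<dots> = \<bar>P (am q) - q (am q)\<bar> + \<bar>P (am p) - p (am p)\<bar>"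
    by (simp add: L0 L1 abs_minus_commute)
  also have "\<dots> \<le> Max (range (\<lambda>y. \<bar>P y - q y\<bar>)) + Max (range (\<lambda>y. \<bar>P y - p y\<bar>))"
    by (intro add_mono Max_range_ge)
  finally show ?thesis
    by (simp add: L_def)
qed

end
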